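(* Let $1\le r\le s\le t$ and let $u=ABCd$, $v=A'B'C'd'$ be vertices of $E3C(r,s,t)$ with $A\ne A'$, $B=B'$, $C\ne C'$ and $d\ne d'$. Then there exist $2r+2$ pairwise internally disjoint $u$–$v$ paths in $E3C(r,s,t)$, each of length at most $r+t+7$.
   Context: The exchanged 3-ary $n$-cube $E3C(r,s,t)$ ($r,s,t\ge1$, $n=r+s+t+1$): vertices are strings written $x=ABCd$ with $A\in\{0,1,2\}^r$, $B\in\{0,1,2\}^s$, $C\in\{0,1,2\}^t$, $d\in\{0,1,2\}$. Two distinct vertices $x=ABCd$, $y=A'B'C'd'$ are adjacent iff one of: (E0) $A=A',B=B',C=C'$ and $d\ne d'$; (E1) $d=d'=0$, $A=A'$, $B=B'$ and $C,C'$ differ in exactly one position; (E2) $d=d'=1$, $A=A'$, $C=C'$ and $B,B'$ differ in exactly one position; (E3) $d=d'=2$, $B=B'$, $C=C'$ and $A,A'$ differ in exactly one position. Paths are internally disjoint if they share no vertices other than their endpoints; length = number of edges. *)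

theory Defs
  imports Main
begin

type_synonym e3c_vertex = "nat list \<times> nat list \<times> nat list \<times> nat"

definition ternary_word :: "nat \<Rightarrow> nat list \<Rightarrow> bool" where
  "ternary_word k X \<longleftrightarrow> length X = k \<and> set X \<subseteq> {0,1,2}"

definition e3c_verts :: "nat \<Rightarrow> nat \<Rightarrow> nat \<Rightarrow> e3c_vertex set" where
  "e3c_verts r s t = {(A,B,C,d). ternary_word r A \<and> ternary_word s B \<and> ternary_word t C \<and> d \<in> {0,1,2}}"

definition differ_one :: "nat list \<Rightarrow> nat list \<Rightarrow> bool" where
  "differ_one X Y \<longleftrightarrow> length X = length Y \<and> card {i. i < length X \<and> X ! i \<noteq> Y ! i} = 1"

definition e3c_adj :: "nat \<Rightarrow> nat \<Rightarrow> nat \<Rightarrow> e3c_vertex \<Rightarrow> e3c_vertex \<Rightarrow> bool" where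
  "e3c_adj r s t x y \<longleftrightarrow> x \<in> e3c_verts r s t \<and> y \<in> e3c_verts r s t \<and> x \<noteq> y \<and>
     (case x of (A,B,C,d) \<Rightarrow> case y of (A',B',C',d') \<Rightarrow>
        (A = A' \<and> B = B' \<and> C = C' \<and> d \<noteq> d') \<or>
        (d = 0 \<and> d' = 0 \<and> A = A' \<and> B = B' \<and> differ_one C C') \<or>
        (d = 1 \<and> d' = 1 \<and> A = A' \<and> C = C' \<and> differ_one B B') \<or>
        (d = 2 \<and> d' = 2 \<and> B = B' \<and> C = C' \<and> differ_one A A'))"

definition e3c_path :: "nat \<Rightarrow> nat \<Rightarrow> nat \<Rightarrow> e3c_vertex \<Rightarrow> e3c_vertex \<Rightarrow> e3c_vertex list \<Rightarrow> bool" where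
  "e3c_path r s t u v P \<longleftrightarrow> P \<noteq> [] \<and> hd P = u \<and> last P = v \<and> distinct P \<and>
     set P \<subseteq> e3c_verts r s t \<and>
     (\<forall>i. Suc i < length P \<longrightarrow> e3c_adj r s t (P ! i) (P ! Suc i))"

definition path_len :: "'a list \<Rightarrow> nat" where
  "path_len P = length P - 1"

definition interior :: "'a list \<Rightarrow> 'a set" where
  "interior P = set (butlast (tl P))"

end

theory Submission
  imports Defs "HOL-Combinatorics.Transposition"
begin

text \<open>
  A walk is described by waypoints: between consecutive
  waypoints it either changes the level or rewrites the word that may change on the current
  level (\<open>C\<close>, \<open>B\<close>, \<open>A\<close> on levels 0, 1, 2) into a target word, one position at a time from left to
  right. For each pair of levels we give \<open>2r + 2\<close> such walks of length at most \<open>r + t + 7\<close>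
  that leave \<open>u\<close> through distinct neighbours and carry distinct intermediate words (distinct
  neighbours of \<open>A\<close>, \<open>B\<close> or \<open>C'\<close>), so that any two of them meet only in \<open>u\<close> and \<open>v\<close>.
  The opposite order of levels is handled by reversing the walks, and shortcutting each walk to
  a path preserves both the length bound and the disjointness. Since \<open>u\<close> and \<open>v\<close> are not
  adjacent, every path has an interior vertex, so the paths are pairwise distinct.
\<close>

section \<open>Hamming distance and correction paths\<close>

definition hamming :: "'a list \<Rightarrow> 'a list \<Rightarrow> nat" where
  "hamming X Y = card {i. i < length X \<and> X ! i \<noteq> Y ! i}"

lemma hamming_Cons: "hamming (x # X) (y # Y) = (if x = y then 0 else 1) + hamming X Y"
proof -
  have "{i. i < length (x # X) \<and> (x # X) ! i \<noteq> (y # Y) ! i} =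
        (if x = y then {} else {0}) \<union> Suc ` {i. i < length X \<and> X ! i \<noteq> Y ! i}"
    (is "?L = ?R")
  proof
    show "?L \<subseteq> ?R"
    proof
      fix i assume "i \<in> ?L"
      then show "i \<in> ?R" by (cases i) auto
    qed
  qed (auto split: if_splits)
  then show ?thesis
    by (simp add: hamming_def card_image)
qed

lemma hamming_Nil [simp]: "hamming [] Y = 0"
  by (simp add: hamming_def)

lemma hamming_le_length: "hamming X Y \<le> length X"
proof -
  have "{i. i < length X \<and> X ! i \<noteq> Y ! i} \<subseteq> {..<length X}" by auto
  then show ?thesis unfolding hamming_def by (metis card_lessThan card_mono finite_lessThan)
qed

lemma hamming_eq_0_iff: "length X = length Y \<Longrightarrow> hamming X Y = 0 \<longleftrightarrow> X = Y"
  by (auto simp: hamming_def list_eq_iff_nth_eq)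

lemma differ_one_iff_hamming: "differ_one X Y \<longleftrightarrow> length X = length Y \<and> hamming X Y = 1"
  by (simp add: differ_one_def hamming_def)

lemma hamming_sym: "length X = length Y \<Longrightarrow> hamming X Y = hamming Y X"
  unfolding hamming_def by (metis)

lemma differ_one_sym: "differ_one X Y \<Longrightarrow> differ_one Y X"
  by (simp add: differ_one_iff_hamming hamming_sym)

lemma differ_one_imp_neq: "differ_one X Y \<Longrightarrow> X \<noteq> Y"
  by (auto simp: differ_one_def)

lemma differ_one_Cons:
  "length X = length Y \<Longrightarrow>
   differ_one (x # X) (y # Y) \<longleftrightarrow> (x = y \<and> differ_one X Y) \<or> (x \<noteq> y \<and> X = Y)"
  by (auto simp: differ_one_iff_hamming hamming_Cons hamming_eq_0_iff)

lemma ternary_word_nth: "ternary_word n X \<Longrightarrow> i < n \<Longrightarrow> X ! i \<in> {0, 1, 2}"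
  unfolding ternary_word_def using nth_mem by blast

fun fix_path :: "'a list \<Rightarrow> 'a list \<Rightarrow> 'a list list" where
  "fix_path (x # X) (y # Y) =
     (if x = y then map (Cons x) (fix_path X Y) else (x # X) # map (Cons y) (fix_path X Y))"
| "fix_path X Y = [X]"

lemma fix_path_not_Nil [simp]: "fix_path X Y \<noteq> []"
  by (induction X Y rule: fix_path.induct) auto

lemma hd_fix_path [simp]: "hd (fix_path X Y) = X"
  by (induction X Y rule: fix_path.induct) (auto simp: hd_map)

lemma last_fix_path [simp]: "length X = length Y \<Longrightarrow> last (fix_path X Y) = Y"
  by (induction X Y rule: fix_path.induct) (auto simp: last_map)

lemma fix_path_self: "fix_path X X = [X]"
  by (induction X) simp_all

lemma fix_path_of_differ_one: "differ_one X Y \<Longrightarrow> fix_path X Y = [X, Y]"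
proof (induction X Y rule: fix_path.induct)
  case (1 x X y Y)
  then have "length X = length Y"
    by (simp add: differ_one_def)
  with 1 show ?case
    by (cases "x = y") (simp_all add: differ_one_Cons fix_path_self)
qed (auto simp: differ_one_def)

lemma start_mem_fix_path [simp]: "X \<in> set (fix_path X Y)"
  using hd_in_set[OF fix_path_not_Nil] by simp

lemma end_mem_fix_path [simp]: "length X = length Y \<Longrightarrow> Y \<in> set (fix_path X Y)"
  using last_in_set[OF fix_path_not_Nil, of X Y] by simp

lemma length_fix_path: "length X = length Y \<Longrightarrow> length (fix_path X Y) = Suc (hamming X Y)"
  by (induction X Y rule: fix_path.induct) (auto simp: hamming_Cons)

lemma successively_differ_one_fix_path: "length X = length Y \<Longrightarrow> successively differ_one (fix_path X Y)"
proof (induction X Y rule: fix_path.induct)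
  case (1 x X y Y)
  then have len: "length X = length Y" by simp
  have "successively differ_one (fix_path X Y)"
    using 1 len by (cases "x = y") auto
  then have IH: "successively differ_one (map (Cons z) (fix_path X Y))" for z
    unfolding successively_map by (rule successively_mono) (metis differ_one_Cons differ_one_def)
  show ?case
    using IH[of x] IH[of y] len by (simp add: successively_Cons hd_map differ_one_Cons)
qed auto

lemma mem_fix_pathD:
  "Z \<in> set (fix_path X Y) \<Longrightarrow> \<exists>m. Z = take m Y @ drop m X"
proof (induction X Y arbitrary: Z rule: fix_path.induct)
  case (1 x X y Y)
  show ?case
  proof (cases "Z = x # X")
    case True
    then show ?thesis by (metis append.left_neutral drop0 take0)
  next
    case False
    then obtain W where "Z = y # W" "W \<in> set (fix_path X Y)"
      using "1.prems" by (auto split: if_splits)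
    with 1 obtain m where "Z = y # take m Y @ drop m X" by (cases "x = y") auto
    then show ?thesis by (metis append_Cons drop_Suc_Cons take_Suc_Cons)
  qed
qed (auto intro!: exI[of _ 0])

lemma mem_fix_path_nth:
  assumes "length X = length Y" "Z \<in> set (fix_path X Y)"
  shows "length Z = length X" "i < length X \<Longrightarrow> Z ! i = X ! i \<or> Z ! i = Y ! i"
proof -
  obtain m where Z: "Z = take m Y @ drop m X" using mem_fix_pathD[OF assms(2)] ..
  then show "length Z = length X" using assms(1) by simp
  show "Z ! i = X ! i \<or> Z ! i = Y ! i" if "i < length X"
    using that assms(1) by (cases "i < m") (simp_all add: Z nth_append)
qed

lemma ternary_word_fix_path:
  "ternary_word n X \<Longrightarrow> ternary_word n Y \<Longrightarrow> Z \<in> set (fix_path X Y) \<Longrightarrow> ternary_word n Z"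
proof -
  assume X: "ternary_word n X" and Y: "ternary_word n Y" and Z: "Z \<in> set (fix_path X Y)"
  then have len: "length X = length Y" by (simp add: ternary_word_def)
  have "Z ! i \<in> {0, 1, 2}" if "i < length Z" for i
  proof -
    have "i < n" using that X mem_fix_path_nth(1)[OF len Z] by (simp add: ternary_word_def)
    then have "X ! i \<in> {0, 1, 2}" "Y ! i \<in> {0, 1, 2}"
      using X Y ternary_word_nth by blast+
    then show ?thesis
      using mem_fix_path_nth(2)[OF len Z] that mem_fix_path_nth(1)[OF len Z] by force
  qed
  then have "set Z \<subseteq> {0, 1, 2}"
    by (metis in_set_conv_nth subsetI)
  then show ?thesis
    using X mem_fix_path_nth(1)[OF len Z] by (simp add: ternary_word_def)
qed

section \<open>Neighbours of a ternary word\<close>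

lemma add_mod3_neq: "b < 2 \<Longrightarrow> (x + b + 1) mod 3 \<noteq> (x::nat)"
  by presburger

lemma add_mod3_cancel: "b < 2 \<Longrightarrow> c < 2 \<Longrightarrow> (x + b + 1) mod 3 = (x + c + 1) mod 3 \<Longrightarrow> b = (c::nat)"
  by presburger

text \<open>The \<open>2n\<close> neighbours of a ternary word of length \<open>n\<close> are indexed by \<open>m < 2n\<close>: position
  \<open>m div 2\<close> is increased by \<open>1 + m mod 2\<close> modulo 3.\<close>

definition nbr :: "nat list \<Rightarrow> nat \<Rightarrow> nat list" where
  "nbr X m = X[m div 2 := (X ! (m div 2) + m mod 2 + 1) mod 3]"

lemma length_nbr [simp]: "length (nbr X m) = length X"
  by (simp add: nbr_def)

lemma nth_nbr:
  "i < length X \<Longrightarrow> nbr X m ! i = (if i = m div 2 then (X ! i + m mod 2 + 1) mod 3 else X ! i)"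
  by (simp add: nbr_def)

lemma nbr_nth_neq: "m < 2 * length X \<Longrightarrow> nbr X m ! (m div 2) \<noteq> X ! (m div 2)"
  using add_mod3_neq[of "m mod 2" "X ! (m div 2)"] by (simp add: nth_nbr less_mult_imp_div_less)

lemma nbr_neq [simp]: "m < 2 * length X \<Longrightarrow> nbr X m \<noteq> X" "m < 2 * length X \<Longrightarrow> X \<noteq> nbr X m"
  using nbr_nth_neq by metis+

lemma ternary_word_nbr: "ternary_word n X \<Longrightarrow> m < 2 * n \<Longrightarrow> ternary_word n (nbr X m)"
  unfolding ternary_word_def nbr_def by (auto dest!: subsetD[OF set_update_subset_insert])

lemma differ_one_nbr: "m < 2 * length X \<Longrightarrow> differ_one X (nbr X m)"
proof -
  assume m: "m < 2 * length X"
  have "X ! i \<noteq> nbr X m ! i \<longleftrightarrow> i = m div 2" if "i < length X" for i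
    using that nbr_nth_neq[OF m] by (auto simp: nth_nbr)
  moreover have "m div 2 < length X"
    using m by (simp add: less_mult_imp_div_less)
  ultimately have "{i. i < length X \<and> X ! i \<noteq> nbr X m ! i} = {m div 2}"
    by blast
  then show ?thesis by (simp add: differ_one_def)
qed

lemma fix_path_nbr [simp]:
  "m < 2 * length X \<Longrightarrow> fix_path X (nbr X m) = [X, nbr X m]"
  "m < 2 * length X \<Longrightarrow> fix_path (nbr X m) X = [nbr X m, X]"
  by (simp_all add: differ_one_nbr differ_one_sym fix_path_of_differ_one)

lemma nbr_nth_eq_imp_eq:
  assumes "k < 2 * length X" "l < 2 * length X" "nbr X k ! (l div 2) = nbr X l ! (l div 2)"
  shows "k = l"
proof (cases "k div 2 = l div 2")
  case True
  then have "(X ! (l div 2) + k mod 2 + 1) mod 3 = (X ! (l div 2) + l mod 2 + 1) mod 3"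
    using assms by (simp add: nth_nbr less_mult_imp_div_less)
  then have "k mod 2 = l mod 2"
    using add_mod3_cancel[of "k mod 2" "l mod 2" "X ! (l div 2)"] by simp
  with True show ?thesis by (metis div_mult_mod_eq)
next
  case False
  then show ?thesis
    using assms nbr_nth_neq[OF assms(2)] by (simp add: nth_nbr less_mult_imp_div_less)
qed

lemma nbr_eq_iff: "k < 2 * length X \<Longrightarrow> l < 2 * length X \<Longrightarrow> nbr X k = nbr X l \<longleftrightarrow> k = l"
  using nbr_nth_eq_imp_eq by metis

lemma exists_nbr_toward:
  assumes "ternary_word n X" "ternary_word n Y" "X \<noteq> Y"
  shows "\<exists>k < 2 * n. nbr X k ! (k div 2) = Y ! (k div 2)"
proof -
  obtain i where i: "i < n" "X ! i \<noteq> Y ! i"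
    using assms by (auto simp: ternary_word_def list_eq_iff_nth_eq)
  have "X ! i \<in> {0, 1, 2}" "Y ! i \<in> {0, 1, 2}"
    using assms(1,2) i(1) ternary_word_nth by blast+
  then have "Y ! i = (X ! i + 0 + 1) mod 3 \<or> Y ! i = (X ! i + 1 + 1) mod 3"
    using i(2) by auto
  then obtain b :: nat where b: "b < 2" "Y ! i = (X ! i + b + 1) mod 3"
    using that[of 0] that[of 1] by auto
  have "nbr X (2 * i + b) ! i = Y ! i"
    using assms(1) i(1) b by (simp add: nth_nbr ternary_word_def)
  then show ?thesis
    using i(1) b(1) by (intro exI[of _ "2 * i + b"]) simp
qed

lemma nbr_mem_fix_path:
  assumes "length X = length Y" "k < 2 * length Y" "nbr Y k \<in> set (fix_path X Y)"
  shows "X ! (k div 2) = nbr Y k ! (k div 2)"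
    and "\<And>i. k div 2 < i \<Longrightarrow> i < length Y \<Longrightarrow> X ! i = Y ! i"
proof -
  obtain m where m: "nbr Y k = take m Y @ drop m X"
    using mem_fix_pathD[OF assms(3)] ..
  have nth: "nbr Y k ! i = (if i < m then Y ! i else X ! i)" if "i < length Y" for i
    using that assms(1) by (simp add: m nth_append)
  have j: "k div 2 < length Y"
    using assms(2) by (simp add: less_mult_imp_div_less)
  then have "\<not> k div 2 < m"
    using nth nbr_nth_neq[OF assms(2)] by auto
  then show "X ! (k div 2) = nbr Y k ! (k div 2)"
    using nth[OF j] by simp
  show "X ! i = Y ! i" if "k div 2 < i" "i < length Y" for i
    using nth[OF that(2)] \<open>\<not> k div 2 < m\<close> that by (simp add: nth_nbr)
qed

lemma nbr_mem_fix_path_unique: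
  assumes len: "length X = length Y" and kl: "k < 2 * length Y" "l < 2 * length Y"
    and mem: "nbr Y k \<in> set (fix_path X Y)" "nbr Y l \<in> set (fix_path X Y)"
  shows "k = l"
proof -
  note k = nbr_mem_fix_path[OF len kl(1) mem(1)] and l = nbr_mem_fix_path[OF len kl(2) mem(2)]
  have "k div 2 = l div 2"
  proof (rule ccontr)
    assume "k div 2 \<noteq> l div 2"
    then consider "k div 2 < l div 2" | "l div 2 < k div 2" by linarith
    then show False
    proof cases
      case 1
      then show False
        using k(2)[of "l div 2"] l(1) nbr_nth_neq[OF kl(2)] kl(2) by (simp add: less_mult_imp_div_less)
    next
      case 2
      then show False
        using l(2)[of "k div 2"] k(1) nbr_nth_neq[OF kl(1)] kl(1) by (simp add: less_mult_imp_div_less)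
    qed
  qed
  then show ?thesis
    using k(1) l(1) kl by (intro nbr_nth_eq_imp_eq[of k Y l]) simp_all
qed

section \<open>Walks\<close>

definition walk :: "('a \<Rightarrow> 'a \<Rightarrow> bool) \<Rightarrow> 'a \<Rightarrow> 'a \<Rightarrow> 'a list \<Rightarrow> bool" where
  "walk R x y W \<longleftrightarrow> W \<noteq> [] \<and> hd W = x \<and> last W = y \<and> successively R W"

lemma walk_append: "walk R x y V \<Longrightarrow> walk R y z W \<Longrightarrow> walk R x z (V @ tl W)"
  unfolding walk_def by (cases W) (auto simp: successively_append_iff successively_Cons)

lemma walk_rev: "symp R \<Longrightarrow> walk R x y W \<Longrightarrow> walk R y x (rev W)"
  unfolding walk_def by (auto simp: hd_rev last_rev elim: successively_mono dest: sympD)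

lemma walk_shortcut:
  assumes "walk R x y W"
  shows "\<exists>P. walk R x y P \<and> distinct P \<and> set P \<subseteq> set W \<and> length P \<le> length W"
  using assms
proof (induction "length W" arbitrary: W rule: less_induct)
  case less
  show ?case
  proof (cases "distinct W")
    case True
    then show ?thesis using less.prems by blast
  next
    case False
    then obtain as z bs cs where W: "W = as @ [z] @ bs @ [z] @ cs"
      using not_distinct_decomp by blast
    have "successively R ((as @ [z]) @ (bs @ z # cs))" "successively R ((as @ z # bs) @ (z # cs))"
      using less.prems by (simp_all add: W walk_def)
    then have "successively R (as @ [z])" "successively R (z # cs)"
      by (simp_all only: successively_append_iff)
    then have "walk R x y (as @ [z] @ cs)"
      using less.prems
      by (auto simp: W walk_def successively_append_iff successively_Cons hd_append)
    then obtain P where "walk R x y P" "distinct P" "set P \<subseteq> set (as @ [z] @ cs)"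
        "length P \<le> length (as @ [z] @ cs)"
      using less.hyps[of "as @ [z] @ cs"] by (auto simp: W)
    then show ?thesis by (auto simp: W)
  qed
qed

lemma walk_interior_not_empty:
  assumes "walk R x y P" "\<not> R x y" "x \<noteq> y"
  shows "interior P \<noteq> {}"
proof -
  obtain a Q where P: "P = a # Q"
    using assms(1) by (cases P) (auto simp: walk_def)
  obtain b M where Q: "Q = b # M"
    using assms P by (cases Q) (auto simp: walk_def)
  have "M \<noteq> []"
    using assms by (auto simp: P Q walk_def)
  then show ?thesis
    by (simp add: P Q interior_def)
qed

lemma interior_eq_Diff:
  assumes "walk R x y P" "distinct P"
  shows "interior P = set P - {x, y}"
proof -
  obtain Q where P: "P = x # Q"
    using assms(1) by (cases P) (auto simp: walk_def)
  show ?thesis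
  proof (cases "Q = []")
    case True
    then show ?thesis using assms(1) by (simp add: P interior_def walk_def)
  next
    case False
    then obtain M where "Q = M @ [y]"
      using assms(1) by (metis P append_butlast_last_id last_ConsR walk_def)
    then show ?thesis
      using assms(2) by (auto simp: P interior_def)
  qed
qed

definition disjoint_walks ::
  "('a \<Rightarrow> 'a \<Rightarrow> bool) \<Rightarrow> nat \<Rightarrow> nat \<Rightarrow> 'a \<Rightarrow> 'a \<Rightarrow> (nat \<Rightarrow> 'a list) \<Rightarrow> bool" where
  "disjoint_walks R n L x y W \<longleftrightarrow>
     (\<forall>i<n. walk R x y (W i) \<and> path_len (W i) \<le> L) \<and>
     (\<forall>i<n. \<forall>j<n. i \<noteq> j \<longrightarrow> set (W i) \<inter> set (W j) \<subseteq> {x, y})"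

lemma pairwise_meet_by_index_classes:
  fixes W :: "nat \<Rightarrow> 'a list"
  assumes "k0 < n"
    and GG: "\<And>k l. k < n \<Longrightarrow> l < n \<Longrightarrow> k \<noteq> l \<Longrightarrow> k \<noteq> k0 \<Longrightarrow> l \<noteq> k0 \<Longrightarrow>
           set (W k) \<inter> set (W l) \<subseteq> S"
    and NG: "\<And>k. k < n \<Longrightarrow> k \<noteq> k0 \<Longrightarrow> set (W k0) \<inter> set (W k) \<subseteq> S"
    and GE: "\<And>k. k < n \<Longrightarrow> k \<noteq> k0 \<Longrightarrow> set (W k) \<inter> set (W n) \<subseteq> S"
      "\<And>k. k < n \<Longrightarrow> k \<noteq> k0 \<Longrightarrow> set (W k) \<inter> set (W (Suc n)) \<subseteq> S"
    and NE: "set (W k0) \<inter> set (W n) \<subseteq> S" "set (W k0) \<inter> set (W (Suc n)) \<subseteq> S"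
    and EE: "set (W n) \<inter> set (W (Suc n)) \<subseteq> S"
  shows "\<forall>i < n + 2. \<forall>j < n + 2. i \<noteq> j \<longrightarrow> set (W i) \<inter> set (W j) \<subseteq> S"
proof -
  have less: "set (W i) \<inter> set (W j) \<subseteq> S" if "i < j" "j < n + 2" for i j
  proof -
    have "j < n \<or> j = n \<or> j = Suc n" using that(2) by linarith
    moreover have "set (W i) \<inter> set (W j) \<subseteq> S" if "j < n"
    proof -
      have "i < n" using \<open>i < j\<close> that by simp
      consider "i = k0" | "j = k0" | "i \<noteq> k0" "j \<noteq> k0" by blast
      then show ?thesis
      proof cases
        case 1 then show ?thesis using NG[of j] \<open>i < j\<close> that by simp
      next
        case 2 then show ?thesis using NG[of i] \<open>i < j\<close> \<open>i < n\<close> by (simp add: Int_commute)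
      next
        case 3 then show ?thesis using GG[of i j] \<open>i < j\<close> \<open>i < n\<close> that by simp
      qed
    qed
    moreover have "set (W i) \<inter> set (W j) \<subseteq> S" if "j = n \<or> j = Suc n"
      using GE[of i] NE EE \<open>i < j\<close> that by (cases "i = k0"; cases "i = n") auto
    ultimately show ?thesis
      by blast
  qed
  show ?thesis
  proof (intro allI impI)
    fix i j assume "i < n + 2" "j < n + 2" "i \<noteq> j"
    then consider "i < j" | "j < i" by linarith
    then show "set (W i) \<inter> set (W j) \<subseteq> S"
      using less \<open>i < n + 2\<close> \<open>j < n + 2\<close> by cases (auto simp: Int_commute)
  qed
qed

lemma disjoint_walks_rev:
  "symp R \<Longrightarrow> disjoint_walks R n L x y W \<Longrightarrow> disjoint_walks R n L y x (\<lambda>i. rev (W i))"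
  by (auto simp: disjoint_walks_def walk_rev path_len_def)

section \<open>Routes in the exchanged 3-ary cube\<close>

lemma symp_e3c_adj: "symp (e3c_adj r s t)"
proof (rule sympI)
  fix x y assume "e3c_adj r s t x y"
  then show "e3c_adj r s t y x"
    by (cases x; cases y) (auto simp: e3c_adj_def dest: differ_one_sym)
qed

lemma not_e3c_adj: "A \<noteq> A' \<Longrightarrow> C \<noteq> C' \<Longrightarrow> \<not> e3c_adj r s t (A, B, C, d) (A', B', C', d')"
  by (simp add: e3c_adj_def)

lemma e3c_adj_verts: "e3c_adj r s t x y \<Longrightarrow> x \<in> e3c_verts r s t \<and> y \<in> e3c_verts r s t"
  by (simp add: e3c_adj_def)

lemma walk_subset_e3c_verts:
  "walk (e3c_adj r s t) x y W \<Longrightarrow> x \<in> e3c_verts r s t \<Longrightarrow> set W \<subseteq> e3c_verts r s t"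
proof -
  have "successively (e3c_adj r s t) W \<Longrightarrow> hd W \<in> e3c_verts r s t \<Longrightarrow> set W \<subseteq> e3c_verts r s t"
    by (induction W rule: induct_list012) (auto dest: e3c_adj_verts)
  then show "walk (e3c_adj r s t) x y W \<Longrightarrow> x \<in> e3c_verts r s t \<Longrightarrow> ?thesis"
    by (auto simp: walk_def)
qed

lemma e3c_paths_from_disjoint_walks:
  assumes walks: "disjoint_walks (e3c_adj r s t) n L u v W"
    and u: "u \<in> e3c_verts r s t" and uv: "\<not> e3c_adj r s t u v" "u \<noteq> v"
  shows "\<exists>P. (\<forall>i<n. e3c_path r s t u v (P i) \<and> path_len (P i) \<le> L) \<and>
             (\<forall>i<n. \<forall>j<n. i \<noteq> j \<longrightarrow> interior (P i) \<inter> interior (P j) = {} \<and> P i \<noteq> P j)"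
proof -
  define P where "P i = (SOME P. walk (e3c_adj r s t) u v P \<and> distinct P \<and>
      set P \<subseteq> set (W i) \<and> length P \<le> length (W i))" for i
  have "walk (e3c_adj r s t) u v (P i) \<and> distinct (P i) \<and>
      set (P i) \<subseteq> set (W i) \<and> length (P i) \<le> length (W i)" if "i < n" for i
    unfolding P_def
    by (rule someI_ex, rule walk_shortcut) (use walks that in \<open>simp add: disjoint_walks_def\<close>)
  then have walk: "\<And>i. i < n \<Longrightarrow> walk (e3c_adj r s t) u v (P i)"
    and distinct: "\<And>i. i < n \<Longrightarrow> distinct (P i)"
    and sub: "\<And>i. i < n \<Longrightarrow> set (P i) \<subseteq> set (W i)"
    and len: "\<And>i. i < n \<Longrightarrow> length (P i) \<le> length (W i)"
    by simp_all
  have "e3c_path r s t u v (P i) \<and> path_len (P i) \<le> L" if "i < n" for i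
  proof
    show "e3c_path r s t u v (P i)"
      using walk[OF that] distinct[OF that] walk_subset_e3c_verts[OF walk[OF that] u]
      unfolding e3c_path_def walk_def successively_conv_nth[symmetric] by blast
    show "path_len (P i) \<le> L"
      using len[OF that] walks that unfolding disjoint_walks_def path_len_def by fastforce
  qed
  moreover have "interior (P i) \<inter> interior (P j) = {} \<and> P i \<noteq> P j"
    if "i < n" "j < n" "i \<noteq> j" for i j
  proof
    have "set (W i) \<inter> set (W j) \<subseteq> {u, v}"
      using walks that unfolding disjoint_walks_def by blast
    then show disjoint: "interior (P i) \<inter> interior (P j) = {}"
      using sub[OF that(1)] sub[OF that(2)]
      by (auto simp: interior_eq_Diff[OF walk[OF that(1)] distinct[OF that(1)]]
          interior_eq_Diff[OF walk[OF that(2)] distinct[OF that(2)]])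
    show "P i \<noteq> P j"
      using disjoint walk_interior_not_empty[OF walk[OF that(1)] uv] by auto
  qed
  ultimately show ?thesis by blast
qed

fun hop :: "e3c_vertex \<Rightarrow> e3c_vertex \<Rightarrow> bool" where
  "hop (A, B, C, d) (A', B', C', d') \<longleftrightarrow>
     (if d \<noteq> d' then (A, B, C) = (A', B', C')
      else if d = 0 then A = A' \<and> B = B'
      else if d = 1 then A = A' \<and> C = C'
      else B = B' \<and> C = C')"

fun leg :: "e3c_vertex \<Rightarrow> e3c_vertex \<Rightarrow> e3c_vertex list" where
  "leg (A, B, C, d) (A', B', C', d') =
     (if d \<noteq> d' then [(A, B, C, d), (A', B', C', d')]
      else if d = 0 then map (\<lambda>Z. (A, B, Z, d)) (fix_path C C')
      else if d = 1 then map (\<lambda>Y. (A, Y, C, d)) (fix_path B B')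
      else map (\<lambda>X. (X, B, C, d)) (fix_path A A'))"

lemma walk_map_fix_path:
  assumes "length X = length Y"
    and "\<And>Z Z'. Z \<in> set (fix_path X Y) \<Longrightarrow> Z' \<in> set (fix_path X Y) \<Longrightarrow> differ_one Z Z' \<Longrightarrow>
           R (f Z) (f Z')"
  shows "walk R (f X) (f Y) (map f (fix_path X Y))"
  using successively_differ_one_fix_path[OF assms(1)] assms
  by (auto simp: walk_def hd_map last_map successively_map elim!: successively_mono)

lemma walk_leg:
  assumes x: "x \<in> e3c_verts r s t" and y: "y \<in> e3c_verts r s t" and "hop x y"
  shows "walk (e3c_adj r s t) x y (leg x y)"
proof -
  obtain A B C d A' B' C' d' where xy: "x = (A, B, C, d)" "y = (A', B', C', d')"
    by (cases x, cases y)
  have words: "ternary_word r A" "ternary_word r A'" "ternary_word s B" "ternary_word s B'"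
      "ternary_word t C" "ternary_word t C'"
    using x y by (simp_all add: xy e3c_verts_def)
  note on_path = ternary_word_fix_path[OF words(1,2)] ternary_word_fix_path[OF words(3,4)]
    ternary_word_fix_path[OF words(5,6)]
  have len: "length A = length A'" "length B = length B'" "length C = length C'"
    using words by (simp_all add: ternary_word_def)
  show ?thesis
  proof (cases "d = d'")
    case False
    then show ?thesis
      using assms by (simp add: xy walk_def e3c_adj_def)
  next
    case True
    then consider "d = 0" | "d = 1" | "d = 2" using x by (auto simp: xy e3c_verts_def)
    then show ?thesis
      using assms True unfolding xy
      by cases (auto simp: e3c_adj_def e3c_verts_def on_path len intro!: walk_map_fix_path
          dest: differ_one_imp_neq)
  qed
qed

fun route :: "e3c_vertex \<Rightarrow> e3c_vertex list \<Rightarrow> e3c_vertex list" where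
  "route x [] = [x]"
| "route x (y # ys) = butlast (leg x y) @ route y ys"

lemma walk_route:
  "successively hop (x # ys) \<Longrightarrow> set (x # ys) \<subseteq> e3c_verts r s t \<Longrightarrow> last (x # ys) = z \<Longrightarrow>
   walk (e3c_adj r s t) x z (route x ys)"
proof (induction ys arbitrary: x)
  case (Cons y ys)
  have "walk (e3c_adj r s t) x y (leg x y)"
    using Cons.prems by (intro walk_leg) (auto simp: successively_Cons)
  moreover have "walk (e3c_adj r s t) y z (route y ys)"
    using Cons.prems by (intro Cons.IH) (auto simp: successively_Cons)
  ultimately have "walk (e3c_adj r s t) x z (leg x y @ tl (route y ys))"
    by (rule walk_append)
  moreover have "route x (y # ys) = leg x y @ tl (route y ys)"
  proof -
    have "route y ys = [y] @ tl (route y ys)"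
      using \<open>walk (e3c_adj r s t) y z (route y ys)\<close>
      by (cases "route y ys") (simp_all add: walk_def)
    moreover have "butlast (leg x y) @ [y] = leg x y"
      using \<open>walk (e3c_adj r s t) x y (leg x y)\<close> append_butlast_last_id[of "leg x y"]
      by (simp add: walk_def)
    ultimately show ?thesis
      by (metis append.assoc route.simps(2))
  qed
  ultimately show ?case
    by simp
qed (simp add: walk_def)

section \<open>Families of walks\<close>

locale e3c_endpoints =
  fixes r s t :: nat and A A' B C C' :: "nat list"
  assumes r_pos: "1 \<le> r" and r_le_s: "r \<le> s" and s_le_t: "s \<le> t"
    and ternary_words: "ternary_word r A" "ternary_word r A'" "ternary_word s B"
      "ternary_word t C" "ternary_word t C'"
    and A_neq: "A \<noteq> A'" and C_neq: "C \<noteq> C'"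
begin

declare ternary_words [simp]

lemma lengths [simp]: "length A = r" "length A' = r" "length B = s" "length C = t" "length C' = t"
  using ternary_words by (simp_all add: ternary_word_def)

lemma nbr_B [simp]:
  assumes "k < 2 * r"
  shows "ternary_word s (nbr B k)" "nbr B k \<noteq> B" "B \<noteq> nbr B k"
    and "fix_path B (nbr B k) = [B, nbr B k]" "fix_path (nbr B k) B = [nbr B k, B]"
  using assms r_le_s by (simp_all add: ternary_word_nbr)

lemma nbr_B_eq_iff [simp]: "k < 2 * r \<Longrightarrow> l < 2 * r \<Longrightarrow> nbr B k = nbr B l \<longleftrightarrow> k = l"
  using r_le_s by (simp add: nbr_eq_iff)

text \<open>The neighbour \<open>nbr A k0\<close> agrees with \<open>A'\<close> in the position where it differs from \<open>A\<close>, so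
  the correction path from it to \<open>A'\<close> avoids all other neighbours of \<open>A\<close>.\<close>

definition k0 :: nat where
  "k0 = (SOME k. k < 2 * r \<and> nbr A k ! (k div 2) = A' ! (k div 2))"

lemma k0: "k0 < 2 * r" "nbr A k0 ! (k0 div 2) = A' ! (k0 div 2)"
  using someI_ex[OF exists_nbr_toward[OF ternary_words(1,2) A_neq]] unfolding k0_def by auto

lemma nbr_A_notin_fix_path [simp]:
  "k < 2 * r \<Longrightarrow> k \<noteq> k0 \<Longrightarrow> nbr A k \<notin> set (fix_path (nbr A k0) A')"
proof
  assume k: "k < 2 * r" "k \<noteq> k0" and on_path: "nbr A k \<in> set (fix_path (nbr A k0) A')"
  have "k0 div 2 < r"
    using k0(1) by (simp add: less_mult_imp_div_less)
  then have "nbr A k ! (k0 div 2) = nbr A k0 ! (k0 div 2)"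
    using mem_fix_path_nth(2)[OF _ on_path, of "k0 div 2"] k0(2) by auto
  then show False
    using nbr_nth_eq_imp_eq[of k A k0] k k0(1) by simp
qed

lemma nbr_A_neq_A': "k < 2 * r \<Longrightarrow> k \<noteq> k0 \<Longrightarrow> nbr A k \<noteq> A'"
  "k < 2 * r \<Longrightarrow> k \<noteq> k0 \<Longrightarrow> A' \<noteq> nbr A k"
  using nbr_A_notin_fix_path end_mem_fix_path[of "nbr A k0" A'] by force+

text \<open>At most one neighbour of \<open>C'\<close>, namely \<open>nbr C' m0\<close>, lies on \<open>fix_path C C'\<close>. The walks
  with index \<open>k \<noteq> k0\<close> that end on level 0 enter \<open>v\<close> from \<open>\<gamma> k\<close>; the transposition leaves
  \<open>nbr C' m0\<close> to the walk with index \<open>k0\<close>.\<close>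

definition m0 :: nat where
  "m0 = (SOME m. m < 2 * t \<and> (\<forall>l < 2 * t. nbr C' l \<in> set (fix_path C C') \<longrightarrow> l = m))"

lemma m0: "m0 < 2 * t" "l < 2 * t \<Longrightarrow> nbr C' l \<in> set (fix_path C C') \<Longrightarrow> l = m0"
proof -
  have "\<exists>m < 2 * t. \<forall>l < 2 * t. nbr C' l \<in> set (fix_path C C') \<longrightarrow> l = m"
  proof (cases "\<exists>m < 2 * t. nbr C' m \<in> set (fix_path C C')")
    case True
    then show ?thesis
      using nbr_mem_fix_path_unique[of C C'] by auto
  next
    case False
    then show ?thesis
      using r_pos r_le_s s_le_t by (intro exI[of _ 0]) auto
  qed
  from someI_ex[OF this] show "m0 < 2 * t" "l < 2 * t \<Longrightarrow> nbr C' l \<in> set (fix_path C C') \<Longrightarrow> l = m0"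
    unfolding m0_def by auto
qed

definition \<gamma> :: "nat \<Rightarrow> nat list" where
  "\<gamma> k = nbr C' (Transposition.transpose k0 m0 k)"

lemma transpose_k0_m0_less: "k < 2 * r \<Longrightarrow> Transposition.transpose k0 m0 k < 2 * t"
  using k0(1) m0(1) r_le_s s_le_t by (auto simp: Transposition.transpose_def)

lemma length_\<gamma> [simp]: "length (\<gamma> k) = t"
  by (simp add: \<gamma>_def)

lemma \<gamma>_ternary [simp]: "k < 2 * r \<Longrightarrow> ternary_word t (\<gamma> k)"
  unfolding \<gamma>_def by (rule ternary_word_nbr[OF ternary_words(5) transpose_k0_m0_less])

lemma fix_path_\<gamma> [simp]: "k < 2 * r \<Longrightarrow> fix_path (\<gamma> k) C' = [\<gamma> k, C']"
  using differ_one_sym[OF differ_one_nbr[of _ C']] transpose_k0_m0_less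
  by (simp add: \<gamma>_def fix_path_of_differ_one)

lemma \<gamma>_neq_C' [simp]: "k < 2 * r \<Longrightarrow> \<gamma> k \<noteq> C'" "k < 2 * r \<Longrightarrow> C' \<noteq> \<gamma> k"
  using transpose_k0_m0_less by (auto simp: \<gamma>_def)

lemma \<gamma>_eq_iff [simp]: "k < 2 * r \<Longrightarrow> l < 2 * r \<Longrightarrow> \<gamma> k = \<gamma> l \<longleftrightarrow> k = l"
  using transpose_k0_m0_less nbr_eq_iff[of _ C'] Transposition.transpose_eq_imp_eq
  by (metis \<gamma>_def lengths(5))

lemma \<gamma>_notin_fix_path [simp]: "k < 2 * r \<Longrightarrow> k \<noteq> k0 \<Longrightarrow> \<gamma> k \<notin> set (fix_path C C')"
  using m0(2)[OF transpose_k0_m0_less] by (auto simp: \<gamma>_def Transposition.transpose_eq_iff)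

lemma \<gamma>_neq_C: "k < 2 * r \<Longrightarrow> k \<noteq> k0 \<Longrightarrow> \<gamma> k \<noteq> C"
  "k < 2 * r \<Longrightarrow> k \<noteq> k0 \<Longrightarrow> C \<noteq> \<gamma> k"
  by (metis \<gamma>_notin_fix_path start_mem_fix_path)+

text \<open>In each family, walk \<open>k < 2r\<close> leaves \<open>u\<close> through a neighbour on the level of \<open>u\<close>
  (\<open>nbr A k\<close> or \<open>nbr B k\<close>), and walks \<open>2r\<close> and \<open>2r + 1\<close> through the two neighbours of \<open>u\<close> on the
  other levels.\<close>

definition walks_2_0 :: "nat \<Rightarrow> e3c_vertex list" where
  "walks_2_0 k =
    (if k = k0 then
       route (A, B, C, 2) [(nbr A k0, B, C, 2), (A', B, C, 2), (A', B, C, 0), (A', B, C', 0)]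
     else if k < 2 * r then
       route (A, B, C, 2) [(nbr A k, B, C, 2), (nbr A k, B, C, 0), (nbr A k, B, \<gamma> k, 0),
         (nbr A k, B, \<gamma> k, 2), (A', B, \<gamma> k, 2), (A', B, \<gamma> k, 0), (A', B, C', 0)]
     else if k = 2 * r then
       route (A, B, C, 2) [(A, B, C, 1), (A, nbr B k0, C, 1), (A, nbr B k0, C, 2),
         (A', nbr B k0, C, 2), (A', nbr B k0, C, 0), (A', nbr B k0, C', 0), (A', nbr B k0, C', 1),
         (A', B, C', 1), (A', B, C', 0)]
     else
       route (A, B, C, 2) [(A, B, C, 0), (A, B, C', 0), (A, B, C', 2), (A', B, C', 2), (A', B, C', 0)])"

lemma walks_2_0_meet:
  "\<forall>i < 2 * r + 2. \<forall>j < 2 * r + 2. i \<noteq> j \<longrightarrow>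
     set (walks_2_0 i) \<inter> set (walks_2_0 j) \<subseteq> {(A, B, C, 2), (A', B, C', 0)}"
proof (rule pairwise_meet_by_index_classes[OF k0(1)])
  fix k l assume kl: "k < 2 * r" "l < 2 * r" "k \<noteq> l" "k \<noteq> k0" "l \<noteq> k0"
  then show "set (walks_2_0 k) \<inter> set (walks_2_0 l) \<subseteq> {(A, B, C, 2), (A', B, C', 0)}"
    using nbr_A_neq_A'[OF kl(1,4)] nbr_A_neq_A'[OF kl(2,5)] \<gamma>_neq_C[OF kl(1,4)] \<gamma>_neq_C[OF kl(2,5)]
    by (auto simp: walks_2_0_def nbr_eq_iff dest!: in_set_butlastD)
next
  fix k assume k: "k < 2 * r" "k \<noteq> k0"
  show "set (walks_2_0 k0) \<inter> set (walks_2_0 k) \<subseteq> {(A, B, C, 2), (A', B, C', 0)}"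
    using k k0(1) nbr_A_neq_A'[OF k] \<gamma>_neq_C[OF k] by (auto simp: walks_2_0_def dest!: in_set_butlastD)
  show "set (walks_2_0 k) \<inter> set (walks_2_0 (2 * r)) \<subseteq> {(A, B, C, 2), (A', B, C', 0)}"
    using k k0(1) by (auto simp: walks_2_0_def dest!: in_set_butlastD)
  show "set (walks_2_0 k) \<inter> set (walks_2_0 (Suc (2 * r))) \<subseteq> {(A, B, C, 2), (A', B, C', 0)}"
    using k k0(1) A_neq C_neq by (auto simp: walks_2_0_def dest!: in_set_butlastD)
next
  show "set (walks_2_0 k0) \<inter> set (walks_2_0 (2 * r)) \<subseteq> {(A, B, C, 2), (A', B, C', 0)}"
    "set (walks_2_0 k0) \<inter> set (walks_2_0 (Suc (2 * r))) \<subseteq> {(A, B, C, 2), (A', B, C', 0)}"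
    "set (walks_2_0 (2 * r)) \<inter> set (walks_2_0 (Suc (2 * r))) \<subseteq> {(A, B, C, 2), (A', B, C', 0)}"
    using k0(1) A_neq C_neq by (auto simp: walks_2_0_def dest!: in_set_butlastD)
qed

lemma disjoint_walks_2_0:
  "disjoint_walks (e3c_adj r s t) (2 * r + 2) (r + t + 7) (A, B, C, 2) (A', B, C', 0) walks_2_0"
proof -
  have "walk (e3c_adj r s t) (A, B, C, 2) (A', B, C', 0) (walks_2_0 k) \<and> path_len (walks_2_0 k) \<le> r + t + 7"
    if k: "k < 2 * r + 2" for k
  proof
    show "walk (e3c_adj r s t) (A, B, C, 2) (A', B, C', 0) (walks_2_0 k)"
      using k k0(1) unfolding walks_2_0_def
      by (auto simp del: route.simps simp: e3c_verts_def ternary_word_nbr intro!: walk_route)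
    show "path_len (walks_2_0 k) \<le> r + t + 7"
      using k k0(1) hamming_le_length[of C C'] hamming_le_length[of A A'] hamming_le_length[of C "\<gamma> k"]
        hamming_le_length[of "nbr A k" A'] hamming_le_length[of "nbr A k0" A']
      by (auto simp: walks_2_0_def path_len_def length_fix_path)
  qed
  then show ?thesis
    using walks_2_0_meet by (simp add: disjoint_walks_def)
qed

definition walks_2_1 :: "nat \<Rightarrow> e3c_vertex list" where
  "walks_2_1 k =
    (if k = k0 then
       route (A, B, C, 2) [(nbr A k0, B, C, 2), (A', B, C, 2), (A', B, C, 0), (A', B, C', 0),
         (A', B, C', 1)]
     else if k < 2 * r then
       route (A, B, C, 2) [(nbr A k, B, C, 2), (nbr A k, B, C, 1), (nbr A k, nbr B k, C, 1),
         (nbr A k, nbr B k, C, 2), (A', nbr B k, C, 2), (A', nbr B k, C, 0), (A', nbr B k, C', 0),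
         (A', nbr B k, C', 1), (A', B, C', 1)]
     else if k = 2 * r then
       route (A, B, C, 2) [(A, B, C, 1), (A, nbr B k0, C, 1), (A, nbr B k0, C, 2),
         (A', nbr B k0, C, 2), (A', nbr B k0, C, 0), (A', nbr B k0, C', 0), (A', nbr B k0, C', 1),
         (A', B, C', 1)]
     else
       route (A, B, C, 2) [(A, B, C, 0), (A, B, C', 0), (A, B, C', 2), (A', B, C', 2), (A', B, C', 1)])"

lemma walks_2_1_meet:
  "\<forall>i < 2 * r + 2. \<forall>j < 2 * r + 2. i \<noteq> j \<longrightarrow>
     set (walks_2_1 i) \<inter> set (walks_2_1 j) \<subseteq> {(A, B, C, 2), (A', B, C', 1)}"
proof (rule pairwise_meet_by_index_classes[OF k0(1)])
  fix k l assume kl: "k < 2 * r" "l < 2 * r" "k \<noteq> l" "k \<noteq> k0" "l \<noteq> k0"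
  then show "set (walks_2_1 k) \<inter> set (walks_2_1 l) \<subseteq> {(A, B, C, 2), (A', B, C', 1)}"
    using nbr_A_neq_A'[OF kl(1,4)] nbr_A_neq_A'[OF kl(2,5)] nbr_B_eq_iff[OF kl(1,2)]
    by (auto simp: walks_2_1_def nbr_eq_iff dest!: in_set_butlastD)
next
  fix k assume k: "k < 2 * r" "k \<noteq> k0"
  show "set (walks_2_1 k0) \<inter> set (walks_2_1 k) \<subseteq> {(A, B, C, 2), (A', B, C', 1)}"
    using k k0(1) nbr_A_neq_A'[OF k] by (auto simp: walks_2_1_def dest!: in_set_butlastD)
  show "set (walks_2_1 k) \<inter> set (walks_2_1 (2 * r)) \<subseteq> {(A, B, C, 2), (A', B, C', 1)}"
    using k k0(1) nbr_B_eq_iff[OF k(1) k0(1)] by (auto simp: walks_2_1_def dest!: in_set_butlastD)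
  show "set (walks_2_1 k) \<inter> set (walks_2_1 (Suc (2 * r))) \<subseteq> {(A, B, C, 2), (A', B, C', 1)}"
    using k k0(1) A_neq C_neq by (auto simp: walks_2_1_def dest!: in_set_butlastD)
next
  show "set (walks_2_1 k0) \<inter> set (walks_2_1 (2 * r)) \<subseteq> {(A, B, C, 2), (A', B, C', 1)}"
    "set (walks_2_1 k0) \<inter> set (walks_2_1 (Suc (2 * r))) \<subseteq> {(A, B, C, 2), (A', B, C', 1)}"
    "set (walks_2_1 (2 * r)) \<inter> set (walks_2_1 (Suc (2 * r))) \<subseteq> {(A, B, C, 2), (A', B, C', 1)}"
    using k0(1) A_neq C_neq by (auto simp: walks_2_1_def dest!: in_set_butlastD)
qed

lemma disjoint_walks_2_1:
  "disjoint_walks (e3c_adj r s t) (2 * r + 2) (r + t + 7) (A, B, C, 2) (A', B, C', 1) walks_2_1"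
proof -
  have "walk (e3c_adj r s t) (A, B, C, 2) (A', B, C', 1) (walks_2_1 k) \<and> path_len (walks_2_1 k) \<le> r + t + 7"
    if k: "k < 2 * r + 2" for k
  proof
    show "walk (e3c_adj r s t) (A, B, C, 2) (A', B, C', 1) (walks_2_1 k)"
      using k k0(1) unfolding walks_2_1_def
      by (auto simp del: route.simps simp: e3c_verts_def ternary_word_nbr intro!: walk_route)
    show "path_len (walks_2_1 k) \<le> r + t + 7"
      using k k0(1) hamming_le_length[of C C'] hamming_le_length[of A A']
        hamming_le_length[of "nbr A k" A'] hamming_le_length[of "nbr A k0" A']
      by (auto simp: walks_2_1_def path_len_def length_fix_path)
  qed
  then show ?thesis
    using walks_2_1_meet by (simp add: disjoint_walks_def)
qed

definition walks_1_0 :: "nat \<Rightarrow> e3c_vertex list" where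
  "walks_1_0 k =
    (if k = k0 then
       route (A, B, C, 1) [(A, nbr B k0, C, 1), (A, nbr B k0, C, 2), (A', nbr B k0, C, 2),
         (A', nbr B k0, C, 0), (A', nbr B k0, C', 0), (A', nbr B k0, C', 1), (A', B, C', 1),
         (A', B, C', 0)]
     else if k < 2 * r then
       route (A, B, C, 1) [(A, nbr B k, C, 1), (A, nbr B k, C, 2), (A', nbr B k, C, 2),
         (A', nbr B k, C, 0), (A', nbr B k, \<gamma> k, 0), (A', nbr B k, \<gamma> k, 1), (A', B, \<gamma> k, 1),
         (A', B, \<gamma> k, 0), (A', B, C', 0)]
     else if k = 2 * r then
       route (A, B, C, 1) [(A, B, C, 2), (A', B, C, 2), (A', B, C, 0), (A', B, C', 0)]
     else
       route (A, B, C, 1) [(A, B, C, 0), (A, B, C', 0), (A, B, C', 2), (A', B, C', 2), (A', B, C', 0)])"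

lemma walks_1_0_meet:
  "\<forall>i < 2 * r + 2. \<forall>j < 2 * r + 2. i \<noteq> j \<longrightarrow>
     set (walks_1_0 i) \<inter> set (walks_1_0 j) \<subseteq> {(A, B, C, 1), (A', B, C', 0)}"
proof (rule pairwise_meet_by_index_classes[OF k0(1)])
  fix k l assume kl: "k < 2 * r" "l < 2 * r" "k \<noteq> l" "k \<noteq> k0" "l \<noteq> k0"
  then show "set (walks_1_0 k) \<inter> set (walks_1_0 l) \<subseteq> {(A, B, C, 1), (A', B, C', 0)}"
    using nbr_B_eq_iff[OF kl(1,2)] by (auto simp: walks_1_0_def dest!: in_set_butlastD)
next
  fix k assume k: "k < 2 * r" "k \<noteq> k0"
  show "set (walks_1_0 k0) \<inter> set (walks_1_0 k) \<subseteq> {(A, B, C, 1), (A', B, C', 0)}"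
    using k k0(1) nbr_B_eq_iff[OF k(1) k0(1)] by (auto simp: walks_1_0_def dest!: in_set_butlastD)
  show "set (walks_1_0 k) \<inter> set (walks_1_0 (2 * r)) \<subseteq> {(A, B, C, 1), (A', B, C', 0)}"
    using k k0(1) by (auto simp: walks_1_0_def dest!: in_set_butlastD)
  show "set (walks_1_0 k) \<inter> set (walks_1_0 (Suc (2 * r))) \<subseteq> {(A, B, C, 1), (A', B, C', 0)}"
    using k k0(1) A_neq by (auto simp: walks_1_0_def dest!: in_set_butlastD)
next
  show "set (walks_1_0 k0) \<inter> set (walks_1_0 (2 * r)) \<subseteq> {(A, B, C, 1), (A', B, C', 0)}"
    "set (walks_1_0 k0) \<inter> set (walks_1_0 (Suc (2 * r))) \<subseteq> {(A, B, C, 1), (A', B, C', 0)}"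
    "set (walks_1_0 (2 * r)) \<inter> set (walks_1_0 (Suc (2 * r))) \<subseteq> {(A, B, C, 1), (A', B, C', 0)}"
    using k0(1) A_neq C_neq by (auto simp: walks_1_0_def dest!: in_set_butlastD)
qed

lemma disjoint_walks_1_0:
  "disjoint_walks (e3c_adj r s t) (2 * r + 2) (r + t + 7) (A, B, C, 1) (A', B, C', 0) walks_1_0"
proof -
  have "walk (e3c_adj r s t) (A, B, C, 1) (A', B, C', 0) (walks_1_0 k) \<and> path_len (walks_1_0 k) \<le> r + t + 7"
    if k: "k < 2 * r + 2" for k
  proof
    show "walk (e3c_adj r s t) (A, B, C, 1) (A', B, C', 0) (walks_1_0 k)"
      using k k0(1) unfolding walks_1_0_def
      by (auto simp del: route.simps simp: e3c_verts_def ternary_word_nbr intro!: walk_route)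
    show "path_len (walks_1_0 k) \<le> r + t + 7"
      using k k0(1) hamming_le_length[of C C'] hamming_le_length[of A A'] hamming_le_length[of C "\<gamma> k"]
      by (auto simp: walks_1_0_def path_len_def length_fix_path)
  qed
  then show ?thesis
    using walks_1_0_meet by (simp add: disjoint_walks_def)
qed

lemma exists_disjoint_walks:
  assumes "d \<in> {0, 1, 2}" "d' \<in> {0, 1, 2}" "d \<noteq> d'"
  shows "\<exists>W. disjoint_walks (e3c_adj r s t) (2 * r + 2) (r + t + 7) (A, B, C, d) (A', B, C', d') W"
proof -
  interpret swapped: e3c_endpoints r s t A' A B C' C
    using r_pos r_le_s s_le_t A_neq C_neq by unfold_locales auto
  note rev = disjoint_walks_rev[OF symp_e3c_adj]
  consider "d = 2" "d' = 0" | "d = 0" "d' = 2" | "d = 2" "d' = 1" | "d = 1" "d' = 2"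
    | "d = 1" "d' = 0" | "d = 0" "d' = 1"
    using assms by auto
  then show ?thesis
    by cases (blast intro: disjoint_walks_2_0 disjoint_walks_2_1 disjoint_walks_1_0
      rev[OF swapped.disjoint_walks_2_0] rev[OF swapped.disjoint_walks_2_1]
      rev[OF swapped.disjoint_walks_1_0])+
qed

end

theorem lemma19:
  fixes r s t :: nat and A B C A' B' C' :: "nat list" and d d' :: nat
  assumes "1 \<le> r" "r \<le> s" "s \<le> t"
    and "(A,B,C,d) \<in> e3c_verts r s t" "(A',B',C',d') \<in> e3c_verts r s t"
    and "A \<noteq> A'" "B = B'" "C \<noteq> C'" "d \<noteq> d'"
  shows "\<exists>P :: nat \<Rightarrow> e3c_vertex list.
     (\<forall>i < 2*r+2. e3c_path r s t (A,B,C,d) (A',B',C',d') (P i) \<and> path_len (P i) \<le> r + t + 7) \<and>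
     (\<forall>i < 2*r+2. \<forall>j < 2*r+2. i \<noteq> j \<longrightarrow> interior (P i) \<inter> interior (P j) = {} \<and> P i \<noteq> P j)"
proof -
  have words: "ternary_word r A" "ternary_word r A'" "ternary_word s B" "ternary_word t C"
      "ternary_word t C'" "d \<in> {0, 1, 2}" "d' \<in> {0, 1, 2}"
    using assms(4,5,7) by (simp_all add: e3c_verts_def)
  interpret e3c_endpoints r s t A A' B C C'
    using assms(1-3,6,8) words by unfold_locales
  obtain W where "disjoint_walks (e3c_adj r s t) (2 * r + 2) (r + t + 7) (A, B, C, d) (A', B, C', d') W"
    using exists_disjoint_walks[OF words(6,7) assms(9)] by blast
  then show ?thesis
    using e3c_paths_from_disjoint_walks[OF _ assms(4) not_e3c_adj] assms(6-8) by force
qed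

end
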